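(* Let $\mathcal{D}_D$ (the Defender data) and $\mathcal{D}_R$ (the Reserved data) be finite, nonempty, disjoint sets of samples, and let $\ell$ be the loss function used to train the Defender model, assumed bounded with $0 \le \ell(x) \le 1$ for all $x$. Let $e_R = \mathbb{E}_{u \sim \mathcal{D}_R}[\ell(u)]$ and $e_D = \mathbb{E}_{u \sim \mathcal{D}_D}[\ell(u)]$, with $u$ drawn uniformly. If $e_R > e_D$, then there is an LTU attack strategy whose LTU membership classification accuracy satisfies $$A_{ltu} \ge \tfrac{1}{2} + \tfrac{1}{2}(e_R - e_D).$$
   Context: An LTU (Leave-Two-Unlabeled) round is as follows: a Defender sample $d$ is drawn uniformly from $\mathcal{D}_D$ and a Reserved sample $r$ is drawn uniformly from $\mathcal{D}_R$, independently; the two samples are presented to the attacker as a pair $(u_1,u_2)$ in uniformly random order, with their membership labels hidden (exactly one of $u_1,u_2$ belongs to $\mathcal{D}_D$). The attacker (which may evaluate $\ell$ and may use its own independent randomness) must predict which of $u_1,u_2$ belongs to $\mathcal{D}_D$. The LTU membership classification accuracy $A_{ltu}$ is the probability (over the draw of $d$, $r$, the ordering, and the attacker's randomness) that this prediction is correct. *)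

theory Defs
  imports Complex_Main
begin

definition avg_loss :: "('a \<Rightarrow> real) \<Rightarrow> 'a set \<Rightarrow> real" where
  "avg_loss l S = (\<Sum>u\<in>S. l u) / real (card S)"

text \<open>An LTU attack strategy: given the pair of losses (l u1, l u2) of the presented
  pair (u1,u2), it outputs the probability (its own randomness) with which it predicts
  that u1 is the Defender sample; otherwise it predicts u2.\<close>
definition ltu_strategy :: "(real \<Rightarrow> real \<Rightarrow> real) \<Rightarrow> bool" where
  "ltu_strategy s \<longleftrightarrow> (\<forall>a b. 0 \<le> s a b \<and> s a b \<le> 1)"

text \<open>LTU accuracy: d uniform in DD, r uniform in DR, independent; order uniformly
  random (each with probability 1/2); correct iff the Defender sample is chosen.\<close>
definition ltu_accuracy ::
  "('a \<Rightarrow> real) \<Rightarrow> 'a set \<Rightarrow> 'a set \<Rightarrow> (real \<Rightarrow> real \<Rightarrow> real) \<Rightarrow> real" where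
  "ltu_accuracy l DD DR s =
     (\<Sum>d\<in>DD. \<Sum>r\<in>DR.
        (1/2) * s (l d) (l r) + (1/2) * (1 - s (l r) (l d)))
     / (real (card DD) * real (card DR))"

end

theory Submission
  imports Defs
begin

text \<open>The attacker predicts that \<open>u\<^sub>1\<close> is the Defender sample with probability
  \<open>(1 + \<ell>(u\<^sub>2) - \<ell>(u\<^sub>1)) / 2\<close>, which lies in \<open>[0, 1]\<close> because the loss does.
  Averaging over the two orders, a pair \<open>(d, r)\<close> is then classified correctly with
  probability \<open>(1 + \<ell>(r) - \<ell>(d)) / 2\<close>, and averaging this separable quantity over
  \<open>d\<close> and \<open>r\<close> gives exactly \<open>1/2 + (e\<^sub>R - e\<^sub>D)/2\<close>.\<close>

definition loss_gap_strategy :: "real \<Rightarrow> real \<Rightarrow> real" where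
  "loss_gap_strategy a b = max 0 (min 1 ((1 + b - a) / 2))"

lemma ltu_strategy_loss_gap_strategy: "ltu_strategy loss_gap_strategy"
  unfolding ltu_strategy_def loss_gap_strategy_def by auto

lemma loss_gap_strategy_eq:
  assumes "0 \<le> a" "a \<le> 1" "0 \<le> b" "b \<le> 1"
  shows "loss_gap_strategy a b = (1 + b - a) / 2"
  using assms unfolding loss_gap_strategy_def by auto

lemma sum_sum_separable:
  "(\<Sum>x\<in>A. \<Sum>y\<in>B. f x + g y) = real (card B) * sum f A + real (card A) * sum g B"
  by (simp add: sum.distrib sum_distrib_left sum_distrib_right mult.commute)

lemma ltu_accuracy_loss_gap_strategy:
  assumes "finite DD" "finite DR" "DD \<noteq> {}" "DR \<noteq> {}"
    and bounded: "\<And>x. 0 \<le> l x \<and> l x \<le> 1"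
  shows "ltu_accuracy l DD DR loss_gap_strategy
           = 1/2 + (1/2) * (avg_loss l DR - avg_loss l DD)"
proof -
  have pair_accuracy:
    "(1/2) * loss_gap_strategy (l d) (l r) + (1/2) * (1 - loss_gap_strategy (l r) (l d))
       = - l d / 2 + (1 + l r) / 2" for d r
    using bounded[of d] bounded[of r] by (simp add: loss_gap_strategy_eq field_simps)
  have "card DD > 0" "card DR > 0"
    using assms by (auto simp: card_gt_0_iff)
  then show ?thesis
    unfolding ltu_accuracy_def avg_loss_def pair_accuracy sum_sum_separable
    by (simp add: sum.distrib sum_negf sum_divide_distrib[symmetric] field_simps)
qed

theorem theorem2:
  fixes l :: "'a \<Rightarrow> real" and DD DR :: "'a set"
  assumes "finite DD" and "finite DR" and "DD \<noteq> {}" and "DR \<noteq> {}"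
    and "DD \<inter> DR = {}"
    and "\<And>x. 0 \<le> l x \<and> l x \<le> 1"
    and "avg_loss l DR > avg_loss l DD"
  shows "\<exists>s. ltu_strategy s \<and>
           ltu_accuracy l DD DR s \<ge> 1/2 + (1/2) * (avg_loss l DR - avg_loss l DD)"
  using ltu_strategy_loss_gap_strategy
    ltu_accuracy_loss_gap_strategy[OF assms(1-4,6)] by auto

end
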